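(* Consider an urn containing $N$ balls, $M \ge \frac{N}{2}$ of which are white while the others are black. The balls are drawn from the urn one by one uniformly at random without replacement until the urn is empty. Let $\ell$ be an integer with $8\log N \le \ell \le \frac{M}{432}$. If $M \ge 64$, then the probability that there exists some contiguous subsequence of at least $54\ell$ drawn balls containing $\ell$ or fewer white balls is at most $N^{-6}$.
   Context: $\log$ denotes the binary logarithm. *)

theory Defs
  imports "HOL-Probability.Probability" "HOL-Combinatorics.Permutations"
begin

text \<open>Balls are labelled 0..N-1; balls with label < M are white.
  A draw order is a permutation s of {..<N}: s k is the ball drawn at step k.
  Drawing uniformly without replacement until empty = uniform random permutation.\<close>

definition draw_orders :: "nat \<Rightarrow> (nat \<Rightarrow> nat) pmf" where
  "draw_orders N = pmf_of_set {s. s permutes {..<N}}"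

definition whites_in :: "nat \<Rightarrow> (nat \<Rightarrow> nat) \<Rightarrow> nat \<Rightarrow> nat \<Rightarrow> nat" where
  "whites_in M s i j = card {k \<in> {i..<j}. s k < M}"

definition sparse_window :: "nat \<Rightarrow> nat \<Rightarrow> nat \<Rightarrow> nat \<Rightarrow> (nat \<Rightarrow> nat) set" where
  "sparse_window N M L l =
     {s. \<exists>i j. i \<le> j \<and> j \<le> N \<and> j - i \<ge> L \<and> whites_in M s i j \<le> l}"

end

(* Union bound. A window of 54 l draws with at most l white balls contains a set of 53 l
   black draws. A fixed set of t positions is all black with probability
   C(N - M, t) / C(N, t) <= ((N - M) / N)^t <= 2^-t. There are at most N windows and
   C(54 l, l) <= (54 e)^l <= 2^(8 l) position sets per window, so the probability is at most
   N 2^(-45 l), which is below N^-6 because 2^l >= N^8. *)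

theory Submission
  imports Defs
begin

lemma power_div_fact_le_exp:
  fixes x :: real
  assumes "0 \<le> x"
  shows "x ^ k / fact k \<le> exp x"
proof -
  have "(\<lambda>n. x ^ n / fact n) sums exp x"
    using exp_converges[of x] by (simp add: divide_inverse scaleR_conv_of_real mult.commute)
  then show ?thesis
    using sum_le_suminf[of "\<lambda>n. x ^ n / fact n" "{k}"] assms by (simp add: sums_iff)
qed

lemma binomial_le_exp_mult_pow: "real (n choose k) \<le> (exp 1 * real n / real k) ^ k"
proof (cases "k = 0")
  case False
  have "real (n choose k) * real k ^ k \<le> real (n choose k) * (exp (real k) * fact k)"
    using power_div_fact_le_exp[of "real k" k] by (intro mult_left_mono) (simp_all add: field_simps)
  also have "\<dots> = exp (real k) * (real (n choose k) * fact k)" by simp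
  also have "\<dots> \<le> exp (real k) * real n ^ k"
    using binomial_fact_pow[of n k]
    by (intro mult_left_mono) (metis of_nat_fact of_nat_le_iff of_nat_mult of_nat_power, simp)
  finally show ?thesis
    using False by (simp add: power_divide power_mult_distrib exp_of_nat_mult[symmetric] field_simps)
qed simp

lemma binomial_mult_pow_le:
  assumes "b \<le> n"
  shows "real (b choose k) * real n ^ k \<le> real (n choose k) * real b ^ k"
proof (cases "k \<le> b")
  case True
  have "(\<Prod>i = 0..<k. (real b - i) * n) \<le> (\<Prod>i = 0..<k. (real n - i) * b)"
  proof (intro prod_mono conjI)
    fix i assume "i \<in> {0..<k}"
    then show "0 \<le> (real b - i) * n" using True by simp
    show "(real b - i) * n \<le> (real n - i) * b"
      using mult_right_mono[of "real b" "real n" "real i"] assms by (simp add: algebra_simps)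
  qed
  then have "real (b choose k) * fact k * n ^ k \<le> real (n choose k) * fact k * b ^ k"
    by (simp add: prod.distrib binomial_gbinomial gbinomial_mult_fact')
  then show ?thesis
    by (simp add: mult.commute mult.left_commute)
qed (simp add: binomial_eq_0)

lemma exists_permutes_image_eq:
  assumes "finite U" "T \<subseteq> U" "T' \<subseteq> U" "card T' = card T"
  shows "\<exists>\<tau>. \<tau> permutes U \<and> \<tau> ` T = T'"
proof -
  have fin: "finite T" "finite T'" using assms finite_subset by auto
  obtain f where f: "bij_betw f T T'" using finite_same_card_bij[OF fin] assms(4) by metis
  have "card (U - T) = card (U - T')" using assms fin by (simp add: card_Diff_subset)
  then obtain g where g: "bij_betw g (U - T) (U - T')"
    using finite_same_card_bij[of "U - T" "U - T'"] assms(1) by auto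
  define \<tau> where "\<tau> x = (if x \<in> T then f x else if x \<in> U then g x else x)" for x
  have \<tau>T: "bij_betw \<tau> T T'" using f by (rule bij_betw_cong[THEN iffD1, rotated]) (simp add: \<tau>_def)
  have "bij_betw \<tau> (U - T) (U - T')" using g by (rule bij_betw_cong[THEN iffD1, rotated]) (simp add: \<tau>_def)
  then have "bij_betw \<tau> (T \<union> (U - T)) (T' \<union> (U - T'))" by (intro bij_betw_combine[OF \<tau>T]) auto
  then have "bij_betw \<tau> U U" using assms by (simp add: Un_absorb1)
  then have "\<tau> permutes U" by (rule bij_imp_permutes) (use assms(2) in \<open>auto simp: \<tau>_def\<close>)
  with \<tau>T show ?thesis by (auto simp: bij_betw_def)
qed

lemma card_permutes_image_subset_cong:
  assumes "finite U" "T \<subseteq> U" "T' \<subseteq> U" "card T' = card T"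
  shows "card {s. s permutes U \<and> s ` T \<subseteq> B} = card {s. s permutes U \<and> s ` T' \<subseteq> B}"
proof -
  obtain \<tau> where \<tau>: "\<tau> permutes U" "\<tau> ` T = T'"
    using exists_permutes_image_eq[OF assms] by blast
  have "bij_betw (\<lambda>s. s \<circ> \<tau>) {s. s permutes U \<and> s ` T' \<subseteq> B} {s. s permutes U \<and> s ` T \<subseteq> B}"
  proof (rule bij_betw_byWitness[where f' = "\<lambda>s. s \<circ> inv \<tau>"])
    show "\<forall>s\<in>{s. s permutes U \<and> s ` T' \<subseteq> B}. s \<circ> \<tau> \<circ> inv \<tau> = s"
      using \<tau> by (simp add: comp_assoc permutes_inv_o)
    show "\<forall>s\<in>{s. s permutes U \<and> s ` T \<subseteq> B}. s \<circ> inv \<tau> \<circ> \<tau> = s"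
      using \<tau> by (simp add: comp_assoc permutes_inv_o)
    show "(\<lambda>s. s \<circ> \<tau>) ` {s. s permutes U \<and> s ` T' \<subseteq> B} \<subseteq> {s. s permutes U \<and> s ` T \<subseteq> B}"
      using \<tau> by (auto simp: permutes_compose image_comp[symmetric])
    have "inv \<tau> ` T' = T" using \<tau> by (metis permutes_inj image_inv_f_f)
    then show "(\<lambda>s. s \<circ> inv \<tau>) ` {s. s permutes U \<and> s ` T \<subseteq> B} \<subseteq> {s. s permutes U \<and> s ` T' \<subseteq> B}"
      using \<tau> by (auto simp: permutes_compose permutes_inv image_comp[symmetric])
  qed
  then show ?thesis by (rule bij_betw_same_card[symmetric])
qed

lemma card_subsets_image_subset:
  assumes "s permutes U" "finite U" "B \<subseteq> U"
  shows "card {T. T \<subseteq> U \<and> card T = k \<and> s ` T \<subseteq> B} = card B choose k"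
proof -
  have "{T. T \<subseteq> U \<and> card T = k \<and> s ` T \<subseteq> B} = {T. T \<subseteq> U \<inter> s -` B \<and> card T = k}"
    by auto
  moreover have "bij_betw s (U \<inter> s -` B) B"
    using permutes_imp_bij[OF assms(1)] assms(3) by (fastforce simp: bij_betw_def inj_on_def)
  ultimately show ?thesis
    using n_subsets[of "U \<inter> s -` B" k] assms(2) by (simp add: bij_betw_same_card)
qed

lemma card_permutes_image_subset:
  assumes "finite U" "B \<subseteq> U" "T \<subseteq> U"
  shows "card {s. s permutes U \<and> s ` T \<subseteq> B} * (card U choose card T)
           = fact (card U) * (card B choose card T)"
proof -
  \<comment> \<open>Double counting of the pairs (T', s) with s ` T' \<subseteq> B; by symmetry each T' contributes equally.\<close>
  define Ts where "Ts = {T'. T' \<subseteq> U \<and> card T' = card T}"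
  have "(\<Sum>T'\<in>Ts. card {s \<in> {s. s permutes U}. s ` T' \<subseteq> B})
          = (card B choose card T) * card {s. s permutes U}"
    using assms card_subsets_image_subset[of _ U B "card T"]
    by (intro sum_multicount) (auto simp: Ts_def finite_permutations)
  moreover have "(\<Sum>T'\<in>Ts. card {s \<in> {s. s permutes U}. s ` T' \<subseteq> B})
                   = card Ts * card {s. s permutes U \<and> s ` T \<subseteq> B}"
  proof -
    have "card {s \<in> {s. s permutes U}. s ` T' \<subseteq> B} = card {s. s permutes U \<and> s ` T \<subseteq> B}"
      if "T' \<in> Ts" for T'
      using that assms card_permutes_image_subset_cong[of U T T' B] by (simp add: Ts_def)
    then show ?thesis by simp
  qed
  moreover have "card Ts = card U choose card T"
    using n_subsets[OF assms(1)] by (simp add: Ts_def)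
  ultimately show ?thesis
    using card_permutations[OF refl assms(1)] by (simp add: mult.commute)
qed

lemma prob_permutes_image_subset_le:
  assumes "finite U" "T \<subseteq> U"
  shows "measure_pmf.prob (pmf_of_set {s. s permutes U}) {s. s ` T \<subseteq> B}
           \<le> (real (card (B \<inter> U)) / real (card U)) ^ card T"
proof -
  let ?c = "card {s. s permutes U \<and> s ` T \<subseteq> B \<inter> U}"
  have "measure_pmf.prob (pmf_of_set {s. s permutes U}) {s. s ` T \<subseteq> B}
          = card ({s. s permutes U} \<inter> {s. s ` T \<subseteq> B}) / card {s. s permutes U}"
    using assms(1) by (intro measure_pmf_of_set) (auto intro: finite_permutations permutes_id)
  also have "{s. s permutes U} \<inter> {s. s ` T \<subseteq> B} = {s. s permutes U \<and> s ` T \<subseteq> B \<inter> U}"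
    using assms(2) by (auto dest: permutes_image)
  finally have prob: "measure_pmf.prob (pmf_of_set {s. s permutes U}) {s. s ` T \<subseteq> B}
                        = ?c / fact (card U)"
    using assms(1) by (simp add: card_permutations)
  have "card T \<le> card U" using assms by (simp add: card_mono)
  then have pos: "0 < real (card U choose card T)" "0 < real (card U) ^ card T"
    by (cases "card T = 0"; simp)+
  have "real ?c * real (card U choose card T) = fact (card U) * real (card (B \<inter> U) choose card T)"
    using arg_cong[OF card_permutes_image_subset[of U "B \<inter> U" T], of real] assms by simp
  then have "?c / fact (card U) = real (card (B \<inter> U) choose card T) / real (card U choose card T)"
    using pos by (simp add: divide_simps mult.commute)
  also have "\<dots> \<le> real (card (B \<inter> U)) ^ card T / real (card U) ^ card T"
    using binomial_mult_pow_le[OF card_mono[OF assms(1) Int_lower2]] pos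
    by (simp add: divide_simps mult.commute)
  finally show ?thesis
    unfolding prob by (simp add: power_divide)
qed

lemma sparse_window_obtain_black_subset:
  assumes "s \<in> sparse_window N M L l" "l \<le> L"
  obtains i T where "i + L \<le> N" "T \<subseteq> {i..<i + L}" "card T = L - l" "s ` T \<subseteq> {M..}"
proof -
  obtain i j where ij: "i \<le> j" "j \<le> N" "L \<le> j - i" "whites_in M s i j \<le> l"
    using assms(1) by (auto simp: sparse_window_def)
  define W where "W = {k \<in> {i..<i + L}. s k < M}"
  define K where "K = {k \<in> {i..<i + L}. M \<le> s k}"
  have "card W \<le> whites_in M s i j"
    unfolding whites_in_def W_def using ij by (intro card_mono) auto
  moreover have "card W + card K = card (W \<union> K)"
    by (rule card_Un_disjoint[symmetric]) (auto simp: W_def K_def)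
  moreover have "W \<union> K = {i..<i + L}" by (auto simp: W_def K_def)
  ultimately have "L - l \<le> card K" using ij by simp
  then obtain T where "T \<subseteq> K" "card T = L - l" by (rule obtain_subset_with_card_n)
  with ij show thesis by (intro that[of i T]) (auto simp: K_def)
qed

lemma prob_sparse_window_le:
  assumes "0 < L" "l \<le> L"
  shows "measure_pmf.prob (draw_orders N) (sparse_window N M L l)
           \<le> real N * real (L choose l) * (real (N - M) / real N) ^ (L - l)"
proof -
  define I where "I = {i. i + L \<le> N}"
  define Ts where "Ts i = {T. T \<subseteq> {i..<i + L} \<and> card T = L - l}" for i
  define E where "E T = {s. s ` T \<subseteq> {M..}}" for T :: "nat set"
  let ?prob = "measure_pmf.prob (draw_orders N)"
  have fin: "finite I" "finite (Ts i)" for i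
    by (auto simp: I_def Ts_def intro: finite_subset[of _ "{..N}"])
  have "sparse_window N M L l \<subseteq> (\<Union>i\<in>I. \<Union>T\<in>Ts i. E T)"
  proof
    fix s assume "s \<in> sparse_window N M L l"
    then obtain i T where "i + L \<le> N" "T \<subseteq> {i..<i + L}" "card T = L - l" "s ` T \<subseteq> {M..}"
      using assms(2) by (rule sparse_window_obtain_black_subset)
    then have "i \<in> I" "T \<in> Ts i" "s \<in> E T" by (simp_all add: I_def Ts_def E_def)
    then show "s \<in> (\<Union>i\<in>I. \<Union>T\<in>Ts i. E T)" by blast
  qed
  then have "?prob (sparse_window N M L l) \<le> ?prob (\<Union>i\<in>I. \<Union>T\<in>Ts i. E T)"
    by (intro measure_pmf.finite_measure_mono) auto
  also have "\<dots> \<le> (\<Sum>i\<in>I. ?prob (\<Union>T\<in>Ts i. E T))"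
    using fin by (intro measure_pmf.finite_measure_subadditive_finite) auto
  also have "\<dots> \<le> (\<Sum>i\<in>I. \<Sum>T\<in>Ts i. ?prob (E T))"
    using fin by (intro sum_mono measure_pmf.finite_measure_subadditive_finite) auto
  also have "\<dots> \<le> (\<Sum>i\<in>I. \<Sum>T\<in>Ts i. (real (N - M) / real N) ^ (L - l))"
  proof (intro sum_mono)
    fix i T assume "i \<in> I" "T \<in> Ts i"
    then have "T \<subseteq> {..<N}" "card T = L - l" by (auto simp: I_def Ts_def)
    moreover have "{M..} \<inter> {..<N} = {M..<N}" by auto
    ultimately show "?prob (E T) \<le> (real (N - M) / real N) ^ (L - l)"
      using prob_permutes_image_subset_le[of "{..<N}" T "{M..}"]
      by (simp add: draw_orders_def E_def)
  qed
  also have "\<dots> = real (card I) * real (L choose l) * (real (N - M) / real N) ^ (L - l)"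
    using n_subsets[of "{i..<i + L}" "L - l" for i] binomial_symmetric[OF assms(2)]
    by (simp add: Ts_def)
  also have "\<dots> \<le> real N * real (L choose l) * (real (N - M) / real N) ^ (L - l)"
  proof -
    have "I \<subseteq> {..<N}" using assms(1) by (auto simp: I_def)
    then have "card I \<le> N" using card_mono[of "{..<N}" I] by simp
    then show ?thesis by (intro mult_right_mono) auto
  qed
  finally show ?thesis .
qed

lemma divide_power_two_le_powr_neg:
  fixes x m :: real
  assumes "0 < x" "(m + 1) * log 2 x \<le> real n"
  shows "x / 2 ^ n \<le> x powr - m"
proof -
  have "x powr (m + 1) = (2 powr log 2 x) powr (m + 1)" using assms(1) by simp
  also have "\<dots> = 2 powr ((m + 1) * log 2 x)" by (simp add: powr_powr mult.commute)
  also have "\<dots> \<le> 2 powr real n" using assms(2) by simp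
  finally have "x powr (m + 1) \<le> 2 ^ n" by (simp add: powr_realpow)
  then have "x / 2 ^ n \<le> x / x powr (m + 1)"
    using assms(1) by (intro divide_left_mono) auto
  also have "\<dots> = x powr - m"
    using assms(1) by (simp add: powr_add powr_minus_divide)
  finally show ?thesis .
qed

theorem lemma3p2:
  fixes N M l :: nat
  assumes "M \<le> N"
    and "real M \<ge> real N / 2"
    and "M \<ge> 64"
    and "8 * log 2 (real N) \<le> real l"
    and "real l \<le> real M / 432"
  shows "measure_pmf.prob (draw_orders N) (sparse_window N M (54 * l) l) \<le> real N powr (-6)"
proof -
  have "log 2 64 \<le> log 2 (real N)" using assms(1,3) by simp
  then have log_N: "6 \<le> log 2 (real N)" using log_pow_cancel[of 2 6] by simp
  then have "0 < l" using assms(4) by linarith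
  have half: "real (N - M) / real N \<le> 1 / 2"
    using assms(1,2,3) by (simp add: of_nat_diff field_simps)
  have "real (54 * l choose l) \<le> (exp 1 * real (54 * l) / real l) ^ l"
    by (rule binomial_le_exp_mult_pow)
  also have "\<dots> = (54 * exp 1) ^ l" using \<open>0 < l\<close> by simp
  also have "\<dots> \<le> 256 ^ l" using exp_le by (intro power_mono) auto
  finally have binom: "real (54 * l choose l) \<le> 2 ^ (8 * l)"
    by (simp add: power_mult)
  have "measure_pmf.prob (draw_orders N) (sparse_window N M (54 * l) l)
          \<le> real N * real (54 * l choose l) * (real (N - M) / real N) ^ (53 * l)"
    using prob_sparse_window_le[of "54 * l" l N M] \<open>0 < l\<close> by simp
  also have "\<dots> \<le> real N * 2 ^ (8 * l) * (1 / 2) ^ (53 * l)"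
    using binom half by (intro mult_mono power_mono) auto
  also have "\<dots> = real N / 2 ^ (45 * l)"
    by (simp add: power_one_over field_simps flip: power_add)
  also have "\<dots> \<le> real N powr - 6"
    using assms(1,3,4) log_N by (intro divide_power_two_le_powr_neg) auto
  finally show ?thesis .
qed

end
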